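(* Let $0<a<b$ and $m\ge1$ be fixed, and let $\{H_n\}$ be a sequence of $n\times n$ Hermitian $m$-banded matrices with $\sigma(H_n)\subset[-b,-a]\cup[a,b]$ for all $n$. Let $P_n$ be the orthogonal spectral projector of $H_n$ onto the span of eigenvectors with negative eigenvalues. Then for every $\xi$ with $1<\xi<\frac{b+a}{b-a}$ there is a constant $C>0$ independent of $n$, $i$, $j$ such that $$|[P_n]_{ij}|\le C\,\xi^{-\frac{|i-j|}{2m}}\quad\text{for all } i,j \text{ and all } n.$$
   Context: A matrix $A$ is $m$-banded if $A_{ij}=0$ whenever $|i-j|>m$. *)

theory Defs
  imports "Jordan_Normal_Form.Char_Poly" "Jordan_Normal_Form.VS_Connect"
begin

definition hermitian_mat :: "nat \<Rightarrow> complex mat \<Rightarrow> bool" where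
  "hermitian_mat n A \<longleftrightarrow> A \<in> carrier_mat n n \<and>
     (\<forall>i<n. \<forall>j<n. A $$ (i,j) = cnj (A $$ (j,i)))"

definition banded :: "nat \<Rightarrow> complex mat \<Rightarrow> bool" where
  "banded m A \<longleftrightarrow> (\<forall>i<dim_row A. \<forall>j<dim_col A.
     real m < \<bar>real i - real j\<bar> \<longrightarrow> A $$ (i,j) = 0)"

definition neg_eigenspace :: "nat \<Rightarrow> complex mat \<Rightarrow> complex vec set" where
  "neg_eigenspace n H = module.span class_ring (module_vec TYPE(complex) n)
     {v. \<exists>k. eigenvector H v k \<and> k \<in> \<real> \<and> Re k < 0}"

definition neg_spectral_projector :: "nat \<Rightarrow> complex mat \<Rightarrow> complex mat \<Rightarrow> bool" where
  "neg_spectral_projector n H P \<longleftrightarrow> P \<in> carrier_mat n n \<and> P * P = P \<and> hermitian_mat n P \<and>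
     {P *\<^sub>v v | v. v \<in> carrier_vec n} = neg_eigenspace n H"

end

theory Submission
  imports Defs "Jordan_Normal_Form.Spectral_Radius" "HOL-Analysis.Generalised_Binomial_Theorem"
begin

text \<open>
  The proof is by polynomial approximation of the sign function. On \<open>a \<le> |r| \<le> b\<close> one has
  \<open>sgn r = (r/\<surd>c) (1 - 2u t(r) + u\<^sup>2) powr (-1/2)\<close> with \<open>u = (b-a)/(b+a)\<close>, \<open>c = ((a+b)/2)\<^sup>2\<close>
  and an affine \<open>t(r) \<in> [-1,1]\<close> of \<open>r\<^sup>2\<close>; expanding with the generating function of the Legendre
  polynomials gives odd polynomials \<open>S\<^sub>K\<close> of degree \<open>2K-1\<close> with \<open>|sgn r - S\<^sub>K(r)| \<le> E \<xi>^-K\<close>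
  for every \<open>\<xi> < 1/u\<close> (first part). On the matrix side (second part), the spectral theorem gives
  an orthonormal eigenbasis of \<open>H\<close>, in which both \<open>I - 2P\<close> and \<open>S\<^sub>K(H)\<close> are diagonal; hence
  every entry of \<open>I - 2P - S\<^sub>K(H)\<close> is at most \<open>E \<xi>^-K\<close>. Since \<open>S\<^sub>K(H)\<close> is \<open>(2K-1)m\<close>-banded,
  choosing \<open>K = \<lfloor>|i-j|/(2m)\<rfloor>\<close> bounds \<open>|P\<^sub>i\<^sub>j|\<close> by \<open>C \<xi>^(-|i-j|/(2m))\<close> uniformly in \<open>n\<close>.
\<close>

unbundle no vec_syntax

section \<open>Chebyshev and Legendre polynomials\<close>

fun cheb :: "nat \<Rightarrow> real \<Rightarrow> real" where
  "cheb 0 x = 1"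
| "cheb (Suc 0) x = x"
| "cheb (Suc (Suc k)) x = 2 * x * cheb (Suc k) x - cheb k x"

lemma cheb_cos: "cheb k (cos \<theta>) = cos (real k * \<theta>)"
proof (induction k rule: induct_nat_012)
  case (ge2 k)
  have "cos (real (Suc (Suc k)) * \<theta>) = 2 * cos \<theta> * cos (real (Suc k) * \<theta>) - cos (real k * \<theta>)"
    using cos_add[of "real (Suc k) * \<theta>" \<theta>] cos_diff[of "real (Suc k) * \<theta>" \<theta>]
    by (simp add: algebra_simps)
  then show ?case using ge2 by simp
qed simp_all

lemma cheb_bound: assumes "-1 \<le> t" "t \<le> 1" shows "\<bar>cheb k t\<bar> \<le> 1"
  using cheb_cos[of k "arccos t"] assms by simp

text \<open>Taylor coefficients of \<open>(1 - z) powr (-1/2)\<close>; they all lie in \<open>[0,1]\<close>.\<close>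
definition isqrt_coeff :: "nat \<Rightarrow> real" where
  "isqrt_coeff k = (-1)^k * ((-1/2) gchoose k)"

lemma isqrt_coeff_Suc: "isqrt_coeff (Suc k) = isqrt_coeff k * ((real k + 1/2) / (real k + 1))"
proof -
  have "(-1/2::real) * ((-1/2) gchoose k) = of_nat k * ((-1/2) gchoose k) + of_nat (Suc k) * ((-1/2) gchoose (Suc k))"
    by (rule gbinomial_mult_1)
  hence "(real k + 1) * ((-1/2::real) gchoose (Suc k)) = - (real k + 1/2) * ((-1/2) gchoose k)"
    by (simp add: algebra_simps)
  hence "((-1/2::real) gchoose (Suc k)) = - ((-1/2) gchoose k) * ((real k + 1/2) / (real k + 1))"
    by (simp add: field_simps)
  thus ?thesis unfolding isqrt_coeff_def by simp
qed

text \<open>By the ratio formula, \<open>1 = c\<^sub>0 \<ge> c\<^sub>1 \<ge> \<dots> \<ge> 0\<close>.\<close>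
lemma isqrt_coeff_bounds: "0 \<le> isqrt_coeff k \<and> isqrt_coeff k \<le> 1"
proof (induction k)
  case (Suc k)
  have f: "0 \<le> (real k + 1/2) / (real k + 1)" "(real k + 1/2) / (real k + 1) \<le> 1"
    by (auto simp: field_simps)
  have "isqrt_coeff k * ((real k + 1/2) / (real k + 1)) \<le> 1 * 1"
    by (rule mult_mono) (use Suc f in auto)
  thus ?case unfolding isqrt_coeff_Suc using Suc f by simp
qed (simp add: isqrt_coeff_def)

lemma isqrt_series: fixes z :: complex assumes "norm z < 1"
  shows "(\<lambda>k. of_real (isqrt_coeff k) * z^k) sums ((1 - z) powr (-1/2))"
proof -
  have coeff: "((-1/2::complex) gchoose k) * (-z)^k = of_real (isqrt_coeff k) * z^k" for k
  proof -
    have "((-1/2::complex) gchoose k) = of_real ((-1/2::real) gchoose k)"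
      by (simp add: gbinomial_prod_rev)
    moreover have "complex_of_real (isqrt_coeff k) = (-1)^k * of_real ((-1/2::real) gchoose k)"
      unfolding isqrt_coeff_def by simp
    ultimately show ?thesis by (simp only: power_minus[of z] mult_ac)
  qed
  have "(\<lambda>k. ((-1/2::complex) gchoose k) * (-z)^k) sums (1 + - z) powr (-1/2)"
    by (rule gen_binomial_complex) (use assms in simp)
  thus ?thesis unfolding coeff by simp
qed

lemma cos_abs_mult: "cos (\<bar>x\<bar> * \<theta>) = cos (x * (\<theta>::real))"
proof (cases "0 \<le> x")
  case False
  hence "\<bar>x\<bar> * \<theta> = - (x * \<theta>)" by simp
  thus ?thesis by (simp only: cos_minus)
qed simp

lemma re_power_cnj_power:
  assumes "i \<le> k"
  shows "Re ((of_real u * cis \<theta>)^i * cnj (of_real u * cis \<theta>)^(k-i))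
           = u^k * cheb (nat \<bar>2 * int i - int k\<bar>) (cos \<theta>)"
proof -
  have "(of_real u * cis \<theta>)^i * cnj (of_real u * cis \<theta>)^(k-i)
          = complex_of_real (u^i * u^(k-i)) * (cis (real i * \<theta>) * cis (- (real (k-i) * \<theta>)))"
    using Complex.DeMoivre[of \<theta> i] Complex.DeMoivre[of "-\<theta>" "k-i"]
    by (simp add: power_mult_distrib cis_cnj)
  also have "u^i * u^(k-i) = u^k" using assms by (simp flip: power_add)
  also have "cis (real i * \<theta>) * cis (- (real (k-i) * \<theta>)) = cis ((real i - real (k-i)) * \<theta>)"
    by (simp add: cis_mult algebra_simps)
  finally have "Re ((of_real u * cis \<theta>)^i * cnj (of_real u * cis \<theta>)^(k-i))
                  = u^k * cos ((real i - real (k-i)) * \<theta>)" by simp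
  also have "real (nat \<bar>2 * int i - int k\<bar>) = \<bar>real i - real (k-i)\<bar>" using assms by auto
  hence "cos ((real i - real (k-i)) * \<theta>) = cheb (nat \<bar>2 * int i - int k\<bar>) (cos \<theta>)"
    unfolding cheb_cos by (simp only: cos_abs_mult)
  finally show ?thesis .
qed

lemma norm_one_minus_cis_sq: "(cmod (1 - of_real u * cis \<theta>))^2 = 1 - 2 * u * cos \<theta> + u^2"
proof -
  have "(cmod (1 - of_real u * cis \<theta>))^2 = (1 - u * cos \<theta>)^2 + (u * sin \<theta>)^2"
    unfolding cmod_power2 by simp
  also have "\<dots> = 1 - 2 * u * cos \<theta> + u^2 * ((sin \<theta>)^2 + (cos \<theta>)^2)"
    by (simp add: power2_eq_square algebra_simps del: sin_cos_squared_add sin_cos_squared_add3)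
  finally show ?thesis by simp
qed

text \<open>The Legendre polynomial \<open>P\<^sub>k\<close> in its Laplace--Heine form
  \<open>P\<^sub>k(cos \<theta>) = \<Sum>\<^sub>i c\<^sub>i c\<^sub>k\<^sub>-\<^sub>i cos((k - 2i)\<theta>)\<close>, with \<open>c\<^sub>i\<close> the coefficients above.\<close>
definition legendre :: "nat \<Rightarrow> real \<Rightarrow> real" where
  "legendre k t = (\<Sum>i\<le>k. isqrt_coeff i * isqrt_coeff (k-i) * cheb (nat \<bar>2 * int i - int k\<bar>) t)"

text \<open>A crude bound, sufficient for geometric convergence of the generating series.\<close>
lemma legendre_bound: assumes "-1 \<le> t" "t \<le> 1" shows "\<bar>legendre k t\<bar> \<le> real (Suc k)"
proof -
  have "\<bar>legendre k t\<bar> \<le> (\<Sum>i\<le>k. \<bar>isqrt_coeff i * isqrt_coeff (k-i) * cheb (nat \<bar>2 * int i - int k\<bar>) t\<bar>)"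
    unfolding legendre_def by (rule sum_abs)
  also have "\<dots> \<le> (\<Sum>i\<le>k. 1)"
  proof (rule sum_mono)
    fix i
    have "\<bar>isqrt_coeff i * isqrt_coeff (k-i)\<bar> \<le> 1"
      using isqrt_coeff_bounds[of i] isqrt_coeff_bounds[of "k-i"] by (simp add: abs_mult mult_le_one)
    moreover have "\<bar>cheb (nat \<bar>2 * int i - int k\<bar>) t\<bar> \<le> 1" by (rule cheb_bound[OF assms])
    ultimately show "\<bar>isqrt_coeff i * isqrt_coeff (k-i) * cheb (nat \<bar>2 * int i - int k\<bar>) t\<bar> \<le> 1"
      by (simp add: abs_mult mult_le_one)
  qed
  finally show ?thesis by simp
qed

lemma isqrt_series_norm_square:
  fixes z :: complex assumes z: "norm z < 1"
  shows "(\<lambda>k. \<Sum>i\<le>k. complex_of_real (isqrt_coeff i * isqrt_coeff (k-i)) * (z^i * cnj z^(k-i)))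
           sums complex_of_real (1 / cmod (1 - z))"
proof -
  define w where "w = (1 - z) powr (-1/2)"
  define a where "a = (\<lambda>i. complex_of_real (isqrt_coeff i) * z^i)"
  define b where "b = (\<lambda>i. complex_of_real (isqrt_coeff i) * (cnj z)^i)"
  have re_pos: "Re (1 - z) > 0" using z complex_Re_le_cmod[of z] by simp
  have "a sums w" unfolding a_def w_def by (rule isqrt_series[OF z])
  moreover have "b sums cnj w"
  proof -
    have "cnj w = (1 - cnj z) powr (-1/2)"
      unfolding w_def using cnj_powr[of "1 - z" "-1/2"] re_pos by simp
    thus ?thesis unfolding b_def using isqrt_series[of "cnj z"] z by simp
  qed
  moreover have "\<bar>isqrt_coeff k\<bar> * norm z^k \<le> norm z^k" for k
    using isqrt_coeff_bounds[of k] by (simp add: mult_left_le_one_le)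
  hence "summable (\<lambda>k. norm (a k))" "summable (\<lambda>k. norm (b k))"
    using z by (auto intro!: summable_comparison_test[OF _ summable_geometric[of "norm z"]]
        simp: a_def b_def norm_mult norm_power)
  ultimately have "(\<lambda>k. \<Sum>i\<le>k. a i * b (k-i)) sums (w * cnj w)"
    using Cauchy_product_sums[of a b] by (simp add: sums_iff)
  moreover have "a i * b (k-i) = complex_of_real (isqrt_coeff i * isqrt_coeff (k-i)) * (z^i * cnj z^(k-i))"
    for i k unfolding a_def b_def by (simp add: mult_ac)
  moreover have "w * cnj w = complex_of_real (1 / cmod (1 - z))"
  proof -
    have "cmod w = cmod (1 - z) powr (-1/2)" unfolding w_def by (subst norm_powr_real_powr') auto
    hence "(cmod w)^2 = cmod (1 - z) powr (-1)" by (simp add: power2_eq_square flip: powr_add)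
    thus ?thesis using re_pos by (simp add: complex_norm_square[symmetric] powr_minus_divide)
  qed
  ultimately show ?thesis by simp
qed

text \<open>Generating function of the Legendre polynomials: take \<open>z = u e^{i\<theta>}\<close> with \<open>t = cos \<theta>\<close>
  above, so that \<open>|1 - z|\<^sup>2 = 1 - 2ut + u\<^sup>2\<close>, and pass to real parts.\<close>
lemma legendre_generating_function:
  assumes u: "0 \<le> u" "u < 1" and t: "-1 \<le> t" "t \<le> 1"
  shows "(\<lambda>k. legendre k t * u^k) sums (1 / sqrt (1 - 2*u*t + u^2))"
proof -
  define \<theta> where "\<theta> = arccos t"
  have t_cos: "cos \<theta> = t" using t \<theta>_def by simp
  define z where "z = complex_of_real u * cis \<theta>"
  have "norm z < 1" using u by (simp add: z_def norm_mult)
  from sums_Re[OF isqrt_series_norm_square[OF this]]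
  have "(\<lambda>k. Re (\<Sum>i\<le>k. complex_of_real (isqrt_coeff i * isqrt_coeff (k-i)) * (z^i * cnj z^(k-i))))
          sums (1 / cmod (1 - z))" by simp
  moreover have "Re (\<Sum>i\<le>k. complex_of_real (isqrt_coeff i * isqrt_coeff (k-i)) * (z^i * cnj z^(k-i)))
                   = legendre k t * u^k" for k
    unfolding Re_sum legendre_def sum_distrib_right
  proof (rule sum.cong[OF refl])
    fix i assume "i \<in> {..k}"
    hence "Re (z^i * cnj z^(k-i)) = u^k * cheb (nat \<bar>2 * int i - int k\<bar>) t"
      unfolding z_def t_cos[symmetric] by (intro re_power_cnj_power) simp
    thus "Re (complex_of_real (isqrt_coeff i * isqrt_coeff (k-i)) * (z^i * cnj z^(k-i)))
            = isqrt_coeff i * isqrt_coeff (k-i) * cheb (nat \<bar>2 * int i - int k\<bar>) t * u^k"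
      by simp
  qed
  moreover have "cmod (1 - z) = sqrt (1 - 2*u*t + u^2)"
    unfolding z_def using norm_one_minus_cis_sq[of u \<theta>] t_cos
    by (metis norm_ge_zero real_sqrt_abs abs_of_nonneg real_sqrt_power)
  ultimately show ?thesis by simp
qed

section \<open>Polynomial approximation of the sign function\<close>

lemma linear_times_geometric_le: assumes "0 \<le> q" "q < 1" shows "real (Suc k) * q^k \<le> 1 / (1 - q)"
proof -
  have "real (Suc k) * q^k = (\<Sum>j<Suc k. q^k)" by simp
  also have "\<dots> \<le> (\<Sum>j<Suc k. q^j)"
    by (intro sum_mono power_decreasing) (use assms in auto)
  also have "\<dots> \<le> (\<Sum>j. q^j)"
    by (rule sum_le_suminf) (use assms in \<open>auto intro: summable_geometric\<close>)
  also have "\<dots> = 1 / (1 - q)" using assms by (intro suminf_geometric) auto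
  finally show ?thesis .
qed

lemma geometric_tail_bound:
  fixes f :: "nat \<Rightarrow> real"
  assumes f: "f sums L" and f_le: "\<And>k. \<bar>f k\<bar> \<le> B * \<rho>^k" and \<rho>: "0 \<le> \<rho>" "\<rho> < 1"
  shows "\<bar>L - (\<Sum>k<K. f k)\<bar> \<le> B * \<rho>^K / (1 - \<rho>)"
proof -
  have tail: "(\<lambda>i. f (i + K)) sums (L - (\<Sum>k<K. f k))" by (rule sums_split_initial_segment[OF f])
  have geo: "(\<lambda>i. B * \<rho>^K * \<rho>^i) sums (B * \<rho>^K * (1 / (1 - \<rho>)))"
    using \<rho> by (intro sums_mult geometric_sums) auto
  have "\<bar>L - (\<Sum>k<K. f k)\<bar> = norm (\<Sum>i. f (i + K))" using sums_unique[OF tail] by simp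
  also have "\<dots> \<le> (\<Sum>i. B * \<rho>^K * \<rho>^i)"
  proof (rule norm_suminf_le)
    show "norm (f (i + K)) \<le> B * \<rho>^K * \<rho>^i" for i
      using f_le[of "i+K"] by (simp add: power_add mult_ac)
  qed (use geo in \<open>simp add: sums_iff\<close>)
  also have "\<dots> = B * \<rho>^K / (1 - \<rho>)" using sums_unique[OF geo] by simp
  finally show ?thesis .
qed

text \<open>Parameters of the sign approximation on \<open>[-b,-a] \<union> [a,b]\<close>: with \<open>u = (b-a)/(b+a)\<close> and
  \<open>c = ((a+b)/2)\<^sup>2\<close>, the affine change of variable \<open>t(r) = (1 + u\<^sup>2 - r\<^sup>2/c)/(2u)\<close> maps
  \<open>a \<le> |r| \<le> b\<close> into \<open>[-1,1]\<close> and satisfies \<open>1 - 2u t(r) + u\<^sup>2 = r\<^sup>2/c\<close>.\<close>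
definition sgn_ratio :: "real \<Rightarrow> real \<Rightarrow> real" where
  "sgn_ratio a b = (b - a) / (b + a)"

definition sgn_scale :: "real \<Rightarrow> real \<Rightarrow> real" where
  "sgn_scale a b = ((a + b) / 2)^2"

definition sgn_arg :: "real \<Rightarrow> real \<Rightarrow> real \<Rightarrow> real" where
  "sgn_arg a b r = ((1 + (sgn_ratio a b)^2) - r^2 / sgn_scale a b) / (2 * sgn_ratio a b)"

lemma sgn_ratio_bounds: "0 < a \<Longrightarrow> a < b \<Longrightarrow> 0 < sgn_ratio a b \<and> sgn_ratio a b < 1"
  by (auto simp: sgn_ratio_def field_simps)

lemma sgn_scale_pos: "0 < a \<Longrightarrow> a < b \<Longrightarrow> 0 < sgn_scale a b"
  by (simp add: sgn_scale_def)

lemma sgn_arg_identity: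
  "0 < a \<Longrightarrow> a < b \<Longrightarrow> 1 - 2 * sgn_ratio a b * sgn_arg a b r + (sgn_ratio a b)^2 = r^2 / sgn_scale a b"
  using sgn_ratio_bounds[of a b] by (simp add: sgn_arg_def field_simps)

lemma sgn_arg_range:
  assumes ab: "0 < a" "a < b" and r: "a \<le> \<bar>r\<bar>" "\<bar>r\<bar> \<le> b"
  shows "-1 \<le> sgn_arg a b r \<and> sgn_arg a b r \<le> 1"
proof -
  define u where "u = sgn_ratio a b"
  define c where "c = sgn_scale a b"
  have u: "0 < u" "u < 1" and c: "0 < c" using sgn_ratio_bounds[OF ab] sgn_scale_pos[OF ab]
    by (auto simp: u_def c_def)
  have "(1 - u) * ((a + b) / 2) = a" "(1 + u) * ((a + b) / 2) = b"
    using ab by (simp_all add: u_def sgn_ratio_def field_simps)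
  hence "c * (1 - u)^2 = a^2" "c * (1 + u)^2 = b^2"
    unfolding c_def sgn_scale_def by (metis power_mult_distrib mult.commute)+
  moreover have "a^2 \<le> r^2" "r^2 \<le> b^2"
    using r ab by (metis abs_le_square_iff abs_of_pos, metis abs_le_square_iff abs_of_pos less_trans)
  ultimately have "(1 - u)^2 \<le> r^2 / c" "r^2 / c \<le> (1 + u)^2" using c by (simp_all add: field_simps)
  thus ?thesis using u unfolding sgn_arg_def u_def[symmetric] c_def[symmetric]
    by (simp add: field_simps power2_eq_square)
qed

text \<open>Truncations of the Legendre expansion of \<open>sgn r = (r/\<surd>c) (1 - 2u t(r) + u\<^sup>2) powr (-1/2)\<close>.
  Each is an odd polynomial in \<open>r\<close> of degree \<open>2K-1\<close>.\<close>
definition sgn_approx :: "real \<Rightarrow> real \<Rightarrow> nat \<Rightarrow> real \<Rightarrow> real" where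
  "sgn_approx a b K r = r / sqrt (sgn_scale a b) * (\<Sum>k<K. legendre k (sgn_arg a b r) * (sgn_ratio a b)^k)"

lemma sgn_series:
  assumes ab: "0 < a" "a < b" and r: "a \<le> \<bar>r\<bar>" "\<bar>r\<bar> \<le> b"
  shows "(\<lambda>k. r / sqrt (sgn_scale a b) * (legendre k (sgn_arg a b r) * (sgn_ratio a b)^k)) sums sgn r"
proof -
  have "(\<lambda>k. legendre k (sgn_arg a b r) * (sgn_ratio a b)^k) sums (1 / sqrt (r^2 / sgn_scale a b))"
    unfolding sgn_arg_identity[OF ab, symmetric]
    using sgn_ratio_bounds[OF ab] sgn_arg_range[OF ab r]
    by (intro legendre_generating_function) auto
  from sums_mult[OF this, of "r / sqrt (sgn_scale a b)"]
  show ?thesis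
    using r ab sgn_scale_pos[OF ab]
    by (simp add: real_sqrt_divide sgn_real_def field_simps abs_if split: if_splits)
qed

lemma sgn_approx_error:
  assumes ab: "0 < a" "a < b" and \<xi>: "1 < \<xi>" "\<xi> < (b + a) / (b - a)"
  shows "\<exists>E\<ge>0. \<forall>K r. a \<le> \<bar>r\<bar> \<longrightarrow> \<bar>r\<bar> \<le> b \<longrightarrow> \<bar>sgn r - sgn_approx a b K r\<bar> \<le> E * (1 / \<xi>)^K"
proof -
  define u where "u = sgn_ratio a b"
  define q where "q = u * \<xi>"
  define \<rho> where "\<rho> = 1 / \<xi>"
  define B where "B = b / sqrt (sgn_scale a b) * (1 / (1 - q))"
  have u: "0 < u" "u < 1" using sgn_ratio_bounds[OF ab] by (auto simp: u_def)
  have "\<xi> * (b - a) < b + a" using \<xi> ab by (simp add: field_simps)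
  hence q: "0 \<le> q" "q < 1" using u \<xi> ab by (auto simp: q_def u_def sgn_ratio_def field_simps)
  have \<rho>: "0 \<le> \<rho>" "\<rho> < 1" using \<xi> by (auto simp: \<rho>_def)
  have c: "0 < sqrt (sgn_scale a b)" using sgn_scale_pos[OF ab] by simp
  show ?thesis
  proof (intro exI[of _ "B / (1 - \<rho>)"] conjI allI impI)
    show "0 \<le> B / (1 - \<rho>)" using ab q \<rho> c unfolding B_def by simp
    fix K r assume r: "a \<le> \<bar>r\<bar>" "\<bar>r\<bar> \<le> b"
    have "\<bar>r / sqrt (sgn_scale a b) * (legendre k (sgn_arg a b r) * u^k)\<bar> \<le> B * \<rho>^k" for k
    proof -
      have "\<bar>r / sqrt (sgn_scale a b) * (legendre k (sgn_arg a b r) * u^k)\<bar>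
              = \<bar>r\<bar> / sqrt (sgn_scale a b) * (\<bar>legendre k (sgn_arg a b r)\<bar> * u^k)"
        using c u by (simp add: abs_mult)
      also have "\<dots> \<le> b / sqrt (sgn_scale a b) * (real (Suc k) * u^k)"
        using legendre_bound[of "sgn_arg a b r" k] sgn_arg_range[OF ab r] r c u
        by (intro mult_mono divide_right_mono) auto
      also have "real (Suc k) * u^k = (real (Suc k) * q^k) * \<rho>^k"
        using \<xi> by (simp add: q_def \<rho>_def field_simps)
      also have "\<dots> \<le> (1 / (1 - q)) * \<rho>^k"
        by (intro mult_right_mono linear_times_geometric_le q) (use \<rho> in auto)
      finally show ?thesis using c ab by (simp add: B_def mult_left_mono mult_ac divide_le_cancel)
    qed
    from geometric_tail_bound[OF sgn_series[OF ab r, folded u_def] this \<rho>]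
    show "\<bar>sgn r - sgn_approx a b K r\<bar> \<le> B / (1 - \<rho>) * (1 / \<xi>)^K"
      unfolding sgn_approx_def u_def \<rho>_def by (simp add: sum_distrib_left mult_ac)
  qed
qed

section \<open>Adjoints, unitary matrices and the spectral theorem\<close>

lemma mat_adjoint_dim[simp]:
  "dim_row (mat_adjoint A) = dim_col A" "dim_col (mat_adjoint A) = dim_row A"
  unfolding mat_adjoint_def mat_of_rows_def by simp_all

lemma mat_adjoint_index[simp]:
  "i < dim_col A \<Longrightarrow> j < dim_row A \<Longrightarrow> mat_adjoint A $$ (i,j) = cnj (A $$ (j,i))"
  unfolding mat_adjoint_def mat_of_rows_def by simp

lemma mat_adjoint_carrier[simp]: "A \<in> carrier_mat n m \<Longrightarrow> mat_adjoint A \<in> carrier_mat m n"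
  unfolding carrier_mat_def by simp

lemma index_mult_mat_sum:
  assumes "i < dim_row A" "j < dim_col B" "dim_col A = dim_row B"
  shows "(A * B) $$ (i,j) = (\<Sum>k<dim_col A. A $$ (i,k) * B $$ (k,j))"
  using assms by (auto simp: scalar_prod_def atLeast0LessThan intro!: sum.cong)

lemma mat_adjoint_mult:
  assumes A: "A \<in> carrier_mat n m" and B: "B \<in> carrier_mat m p"
  shows "mat_adjoint (A * B) = mat_adjoint B * mat_adjoint (A :: complex mat)"
proof (rule eq_matI)
  fix i j assume "i < dim_row (mat_adjoint B * mat_adjoint A)" "j < dim_col (mat_adjoint B * mat_adjoint A)"
  hence i: "i < p" and j: "j < n" using A B by auto
  have "(A * B) $$ (j, i) = (\<Sum>k<m. A $$ (j,k) * B $$ (k,i))"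
    using A B i j by (subst index_mult_mat_sum) auto
  hence "mat_adjoint (A * B) $$ (i, j) = cnj (\<Sum>k<m. A $$ (j,k) * B $$ (k,i))"
    using A B i j by simp
  also have "\<dots> = (mat_adjoint B * mat_adjoint A) $$ (i, j)"
    using A B i j by (subst index_mult_mat_sum) (auto simp: mult.commute)
  finally show "mat_adjoint (A * B) $$ (i, j) = (mat_adjoint B * mat_adjoint A) $$ (i, j)" .
qed (use A B in auto)

lemma mat_adjoint_adjoint[simp]: "mat_adjoint (mat_adjoint A) = (A :: complex mat)"
  by (rule eq_matI) auto

lemma hermitian_mat_iff: "hermitian_mat n A \<longleftrightarrow> A \<in> carrier_mat n n \<and> mat_adjoint A = A"
proof
  assume h: "hermitian_mat n A"
  hence A: "A \<in> carrier_mat n n" unfolding hermitian_mat_def by blast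
  moreover have "mat_adjoint A = A"
  proof (rule eq_matI)
    fix i j assume ij: "i < dim_row A" "j < dim_col A"
    hence "A $$ (j, i) = cnj (A $$ (i, j))" using h A unfolding hermitian_mat_def by blast
    thus "mat_adjoint A $$ (i, j) = A $$ (i, j)" using A ij by simp
  qed (use A in auto)
  ultimately show "A \<in> carrier_mat n n \<and> mat_adjoint A = A" ..
next
  assume "A \<in> carrier_mat n n \<and> mat_adjoint A = A"
  hence A: "A \<in> carrier_mat n n" and adj: "mat_adjoint A = A" by auto
  have "A $$ (i,j) = cnj (A $$ (j,i))" if "i < n" "j < n" for i j
    using mat_adjoint_index[of i A j] A that by (simp add: adj)
  thus "hermitian_mat n A" unfolding hermitian_mat_def using A by blast
qed

definition unitary_mat :: "nat \<Rightarrow> complex mat \<Rightarrow> bool" where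
  "unitary_mat n U \<longleftrightarrow> U \<in> carrier_mat n n \<and> mat_adjoint U * U = 1\<^sub>m n"

text \<open>For square matrices a left inverse is a right inverse: \<open>U U\<^sup>* = I\<close>.\<close>
lemma unitary_mat_right_inverse: "unitary_mat n U \<Longrightarrow> U * mat_adjoint U = 1\<^sub>m n"
  unfolding unitary_mat_def by (auto intro: mat_mult_left_right_inverse)

lemma unitary_mat_mult:
  assumes U: "unitary_mat n U" and V: "unitary_mat n V"
  shows "unitary_mat n (U * V)"
proof -
  have c: "U \<in> carrier_mat n n" "V \<in> carrier_mat n n" "mat_adjoint U \<in> carrier_mat n n"
    "mat_adjoint V \<in> carrier_mat n n" using U V unfolding unitary_mat_def by auto
  have "mat_adjoint (U * V) * (U * V) = mat_adjoint V * ((mat_adjoint U * U) * V)"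
    using c by (simp add: mat_adjoint_mult[of _ n n] assoc_mult_mat[of _ n n _ n _ n])
  also have "\<dots> = 1\<^sub>m n" using U V c unfolding unitary_mat_def by simp
  finally show ?thesis using c unfolding unitary_mat_def by simp
qed

lemma unitary_mat_row_norm:
  assumes U: "unitary_mat n U" and l: "l < n"
  shows "(\<Sum>k<n. (cmod (U $$ (l,k)))^2) = 1"
proof -
  have Uc: "U \<in> carrier_mat n n" using U unitary_mat_def by blast
  have "(U * mat_adjoint U) $$ (l,l) = (\<Sum>k<n. U $$ (l,k) * cnj (U $$ (l,k)))"
    using Uc l by (subst index_mult_mat_sum) auto
  also have "\<dots> = complex_of_real (\<Sum>k<n. (cmod (U $$ (l,k)))^2)"
    by (simp add: complex_norm_square del: of_real_power)
  finally have "complex_of_real (\<Sum>k<n. (cmod (U $$ (l,k)))^2) = (U * mat_adjoint U) $$ (l,l)" ..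
  also have "\<dots> = 1" using unitary_mat_right_inverse[OF U] l by simp
  finally show ?thesis by (metis of_real_eq_1_iff)
qed

lemma unitary_mat_col_nonzero:
  assumes U: "unitary_mat n U" and k: "k < n"
  shows "col U k \<noteq> 0\<^sub>v n"
proof
  assume z: "col U k = 0\<^sub>v n"
  have Uc: "U \<in> carrier_mat n n" and UU: "mat_adjoint U * U = 1\<^sub>m n" using U unitary_mat_def by auto
  have "U $$ (r,k) = 0" if r: "r < n" for r
    using arg_cong[OF z, of "\<lambda>v. v $ r"] Uc r k by simp
  hence "(mat_adjoint U * U) $$ (k,k) = 0" using Uc k by (subst index_mult_mat_sum) auto
  thus False using UU k by simp
qed

lemma unitary_mat_of_cols:
  assumes us: "length us = n" "set us \<subseteq> carrier_vec n"
    and orth: "\<And>i j. i < n \<Longrightarrow> j < n \<Longrightarrow> us ! j \<bullet>c us ! i = (if i = j then 1 else 0)"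
  shows "unitary_mat n (mat_of_cols n us)"
proof -
  let ?W = "mat_of_cols n us"
  have W: "?W \<in> carrier_mat n n" using us by auto
  have "mat_adjoint ?W * ?W = 1\<^sub>m n"
  proof (rule eq_matI)
    fix i j assume "i < dim_row (1\<^sub>m n)" "j < dim_col (1\<^sub>m n)"
    hence ij: "i < n" "j < n" by auto
    hence "(mat_adjoint ?W * ?W) $$ (i,j) = (\<Sum>r<n. us ! j $ r * conjugate (us ! i $ r))"
      using W us by (subst index_mult_mat_sum) (auto simp: mat_of_cols_index mult.commute)
    also have "\<dots> = us ! j \<bullet>c us ! i"
    proof -
      have "us ! i \<in> carrier_vec n" using us ij nth_mem[of i us] by blast
      thus ?thesis by (simp add: scalar_prod_def atLeast0LessThan)
    qed
    finally show "(mat_adjoint ?W * ?W) $$ (i,j) = 1\<^sub>m n $$ (i,j)" using orth ij by simp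
  qed (use W in auto)
  thus ?thesis using W unfolding unitary_mat_def by simp
qed

definition normalize_vec :: "complex Matrix.vec \<Rightarrow> complex Matrix.vec" where
  "normalize_vec w = complex_of_real (1 / sqrt (Re (w \<bullet>c w))) \<cdot>\<^sub>v w"

lemma cscalar_self_real: "w \<bullet>c w = complex_of_real (Re (w \<bullet>c w))"
  using conjugate_square_ge_0_vec[of w] by (simp add: less_eq_complex_def complex_eq_iff)

lemma cscalar_normalize_vec:
  assumes "dim_vec v = dim_vec w"
  shows "normalize_vec v \<bullet>c normalize_vec w
           = complex_of_real (1 / (sqrt (Re (v \<bullet>c v)) * sqrt (Re (w \<bullet>c w)))) * (v \<bullet>c w)"
  using assms
  by (simp add: normalize_vec_def conjugate_smult_vec scalar_prod_def sum_divide_distrib)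

lemma normalize_vec_unit:
  assumes "w \<in> carrier_vec n" "w \<noteq> 0\<^sub>v n"
  shows "normalize_vec w \<bullet>c normalize_vec w = 1"
proof -
  have "w \<bullet>c w \<noteq> 0" using assms by simp
  hence "Re (w \<bullet>c w) \<noteq> 0" using cscalar_self_real[of w] by (metis of_real_0)
  moreover have "Re (w \<bullet>c w) \<ge> 0" using conjugate_square_ge_0_vec[of w] by (simp add: less_eq_complex_def)
  ultimately show ?thesis
    using cscalar_self_real[of w] by (subst cscalar_normalize_vec) (auto simp flip: of_real_mult)
qed

lemma normalize_vec_unit_id: "w \<bullet>c w = 1 \<Longrightarrow> normalize_vec w = w"
  by (simp add: normalize_vec_def)

text \<open>Every unit vector is the first column of some unitary matrix: complete it to a basis,
  orthogonalise by Gram--Schmidt (which keeps the first vector) and normalise.\<close>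
lemma unitary_extension:
  assumes v: "v \<in> carrier_vec n" and unit: "v \<bullet>c v = 1"
  shows "\<exists>W. unitary_mat n W \<and> col W 0 = v"
proof -
  interpret cof_vec_space n "TYPE(complex)" .
  have v0: "v \<noteq> 0\<^sub>v n" using unit v by auto
  note bc = basis_completion[OF v v0]
  obtain vs where bv: "basis_completion v = v # vs"
    using bc(6,7) v0 v by (cases "basis_completion v") auto
  define ws where "ws = gram_schmidt n (basis_completion v)"
  have ws: "corthogonal ws" "set ws \<subseteq> carrier_vec n" "length ws = n" "hd ws = v"
    using gram_schmidt_result[OF bc(2,4,5) ws_def] bc(6) v unfolding ws_def bv by auto
  define us where "us = map normalize_vec ws"
  have us: "length us = n" "set us \<subseteq> carrier_vec n"
    using ws unfolding us_def by (auto simp: normalize_vec_def)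
  have us_nth: "us ! i = normalize_vec (ws ! i)" "ws ! i \<in> carrier_vec n" if "i < n" for i
    using that ws(2,3) unfolding us_def by (auto simp: subsetD)
  have orth: "us ! j \<bullet>c us ! i = (if i = j then 1 else 0)" if ij: "i < n" "j < n" for i j
  proof (cases "i = j")
    case True
    have "ws ! i \<noteq> 0\<^sub>v n" using corthogonalD[OF ws(1), of i i] ws(3) ij by auto
    thus ?thesis using True normalize_vec_unit us_nth[OF ij(1)] by simp
  next
    case False
    have "ws ! j \<bullet>c ws ! i = 0" using corthogonalD[OF ws(1), of j i] ij ws(3) False by auto
    thus ?thesis using False us_nth[OF ij(1)] us_nth[OF ij(2)]
      by (simp add: cscalar_normalize_vec)
  qed
  have "0 < n" using v v0 by (cases n) auto
  hence "us ! 0 = v" using ws(3,4) unit unfolding us_def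
    by (cases ws) (auto simp: normalize_vec_unit_id)
  hence "col (mat_of_cols n us) 0 = v" using us \<open>0 < n\<close> by (subst col_mat_of_cols) auto
  thus ?thesis using unitary_mat_of_cols[OF us orth] by blast
qed

lemma unitary_deflation:
  assumes H: "hermitian_mat n H" and W: "unitary_mat n W" and n: "0 < n"
    and ev: "H *\<^sub>v col W 0 = e \<cdot>\<^sub>v col W 0"
  defines "A \<equiv> mat_adjoint W * H * W"
  shows "hermitian_mat n A" "H * W = W * A" "\<And>i. i < n \<Longrightarrow> A $$ (i,0) = (if i = 0 then e else 0)"
proof -
  have Hc: "H \<in> carrier_mat n n" and Hadj: "mat_adjoint H = H" using H hermitian_mat_iff by auto
  have Wc: "W \<in> carrier_mat n n" and WW: "mat_adjoint W * W = 1\<^sub>m n" using W unitary_mat_def by auto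
  have W'c: "mat_adjoint W \<in> carrier_mat n n" using Wc by simp
  have Ac: "A \<in> carrier_mat n n" unfolding A_def using Hc Wc by auto
  have "mat_adjoint A = mat_adjoint W * mat_adjoint (mat_adjoint W * H)"
    unfolding A_def using Hc Wc by (subst mat_adjoint_mult[of _ n n]) auto
  also have "mat_adjoint (mat_adjoint W * H) = H * W"
    using Hc Wc Hadj by (subst mat_adjoint_mult[of _ n n]) auto
  also have "mat_adjoint W * (H * W) = A"
    unfolding A_def using Hc Wc by (simp add: assoc_mult_mat[of _ n n _ n _ n])
  finally show "hermitian_mat n A" using Ac hermitian_mat_iff by blast
  have "W * A = W * (mat_adjoint W * H) * W"
    unfolding A_def by (rule assoc_mult_mat[symmetric, OF Wc mult_carrier_mat[OF W'c Hc] Wc])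
  also have "W * (mat_adjoint W * H) = (W * mat_adjoint W) * H"
    by (rule assoc_mult_mat[symmetric, OF Wc W'c Hc])
  finally have "W * A = (W * mat_adjoint W) * H * W" .
  thus "H * W = W * A" using unitary_mat_right_inverse[OF W] Hc by simp
  fix i assume i: "i < n"
  have "col A 0 = (mat_adjoint W * H) *\<^sub>v col W 0"
    unfolding A_def using Hc Wc n by (subst col_mult2[of _ n n]) auto
  also have "\<dots> = mat_adjoint W *\<^sub>v (H *\<^sub>v col W 0)"
    using Hc Wc n by (subst assoc_mult_mat_vec[of _ n n _ n]) auto
  also have "\<dots> = e \<cdot>\<^sub>v col (mat_adjoint W * W) 0"
    unfolding ev using Wc W'c n by (simp add: mult_mat_vec[of _ n n] col_mult2[of _ n n])
  finally have "col A 0 = e \<cdot>\<^sub>v unit_vec n 0" using WW n by simp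
  moreover have "A $$ (i,0) = col A 0 $ i" using Ac i n by simp
  ultimately show "A $$ (i,0) = (if i = 0 then e else 0)" using i by simp
qed

lemma unitary_mat_border:
  assumes U: "unitary_mat n U"
  shows "unitary_mat (Suc n) (four_block_mat (1\<^sub>m 1) (0\<^sub>m 1 n) (0\<^sub>m n 1) U)"
proof -
  have Uc: "U \<in> carrier_mat n n" and UU: "mat_adjoint U * U = 1\<^sub>m n" using U unitary_mat_def by auto
  have adj: "mat_adjoint (four_block_mat (1\<^sub>m 1) (0\<^sub>m 1 n) (0\<^sub>m n 1) U)
      = four_block_mat (1\<^sub>m 1) (0\<^sub>m 1 n) (0\<^sub>m n 1) (mat_adjoint U)"
    by (rule eq_matI) (use Uc in auto)
  have "four_block_mat (1\<^sub>m 1) (0\<^sub>m 1 n) (0\<^sub>m n 1) U \<in> carrier_mat (Suc n) (Suc n)"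
    using four_block_carrier_mat[of "1\<^sub>m 1" 1 1 U n n] Uc by simp
  thus ?thesis unfolding unitary_mat_def adj using Uc
    by (simp add: mult_four_block_mat[of _ 1 1 _ n _ n _ _ 1 _ n] UU)
qed

lemma hermitian_first_column_block:
  assumes A: "hermitian_mat (Suc n) A" and col0: "\<And>i. i < Suc n \<Longrightarrow> A $$ (i,0) = (if i = 0 then e else 0)"
  defines "A3 \<equiv> Matrix.mat n n (\<lambda>(i,j). A $$ (Suc i, Suc j))"
  shows "A = four_block_mat (Matrix.mat 1 1 (\<lambda>_. e)) (0\<^sub>m 1 n) (0\<^sub>m n 1) A3" "hermitian_mat n A3"
proof -
  have Ac: "A \<in> carrier_mat (Suc n) (Suc n)"
    and A_herm: "\<And>i j. i < Suc n \<Longrightarrow> j < Suc n \<Longrightarrow> A $$ (i,j) = cnj (A $$ (j,i))"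
    using A unfolding hermitian_mat_def by blast+
  show "hermitian_mat n A3" unfolding A3_def hermitian_mat_def by (auto intro!: A_herm)
  show "A = four_block_mat (Matrix.mat 1 1 (\<lambda>_. e)) (0\<^sub>m 1 n) (0\<^sub>m n 1) A3"
  proof (rule eq_matI)
    fix i j assume "i < dim_row (four_block_mat (Matrix.mat 1 1 (\<lambda>_. e)) (0\<^sub>m 1 n) (0\<^sub>m n 1) A3)"
      "j < dim_col (four_block_mat (Matrix.mat 1 1 (\<lambda>_. e)) (0\<^sub>m 1 n) (0\<^sub>m n 1) A3)"
    hence ij: "i < Suc n" "j < Suc n" by (auto simp: A3_def)
    have "A $$ (0, j) = cnj (A $$ (j, 0))" using A_herm ij by blast
    thus "A $$ (i,j) = four_block_mat (Matrix.mat 1 1 (\<lambda>_. e)) (0\<^sub>m 1 n) (0\<^sub>m n 1) A3 $$ (i,j)"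
      using col0 ij by (cases i; cases j) (auto simp: A3_def)
  qed (use Ac in \<open>auto simp: A3_def\<close>)
qed

lemma unit_eigenvector_exists:
  fixes H :: "complex mat"
  assumes H: "H \<in> carrier_mat (Suc n) (Suc n)"
  shows "\<exists>e v. v \<in> carrier_vec (Suc n) \<and> v \<bullet>c v = 1 \<and> H *\<^sub>v v = e \<cdot>\<^sub>v v"
proof -
  obtain e where "eigenvalue H e" using spectrum_non_empty[OF H] unfolding spectrum_def by auto
  then obtain v where "eigenvector H v e" unfolding eigenvalue_def by blast
  hence v: "v \<in> carrier_vec (Suc n)" "v \<noteq> 0\<^sub>v (Suc n)" "H *\<^sub>v v = e \<cdot>\<^sub>v v"
    using H unfolding eigenvector_def by auto
  have "H *\<^sub>v normalize_vec v = e \<cdot>\<^sub>v normalize_vec v"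
    unfolding normalize_vec_def using H v by (auto simp: mult_mat_vec[of _ "Suc n" "Suc n"])
  moreover have "normalize_vec v \<in> carrier_vec (Suc n)" using v(1) by (simp add: normalize_vec_def)
  ultimately show ?thesis using normalize_vec_unit[OF v(1,2)] by blast
qed

lemma hermitian_deflation:
  assumes H: "hermitian_mat (Suc n) H"
  shows "\<exists>W e A3. unitary_mat (Suc n) W \<and> hermitian_mat n A3 \<and>
           H * W = W * four_block_mat (Matrix.mat 1 1 (\<lambda>_. e)) (0\<^sub>m 1 n) (0\<^sub>m n 1) A3"
proof -
  have Hc: "H \<in> carrier_mat (Suc n) (Suc n)" using H hermitian_mat_def by blast
  obtain e v where v: "v \<in> carrier_vec (Suc n)" "v \<bullet>c v = 1" "H *\<^sub>v v = e \<cdot>\<^sub>v v"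
    using unit_eigenvector_exists[OF Hc] by blast
  obtain W where W: "unitary_mat (Suc n) W" "col W 0 = v" using unitary_extension[OF v(1,2)] by blast
  define A where "A = mat_adjoint W * H * W"
  have A: "hermitian_mat (Suc n) A" "H * W = W * A"
    "\<And>i. i < Suc n \<Longrightarrow> A $$ (i,0) = (if i = 0 then e else 0)"
    using unitary_deflation[OF H W(1) _ v(3)[folded W(2)]] unfolding A_def by auto
  have "A = four_block_mat (Matrix.mat 1 1 (\<lambda>_. e)) (0\<^sub>m 1 n) (0\<^sub>m n 1) (Matrix.mat n n (\<lambda>(i,j). A $$ (Suc i, Suc j)))"
    "hermitian_mat n (Matrix.mat n n (\<lambda>(i,j). A $$ (Suc i, Suc j)))"
    using hermitian_first_column_block[OF A(1)] A(3) by blast+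
  thus ?thesis using W(1) A(2) by metis
qed

lemma block_diagonalization_step:
  assumes W: "unitary_mat (Suc n) W" and H: "H \<in> carrier_mat (Suc n) (Suc n)"
    and HW: "H * W = W * four_block_mat (Matrix.mat 1 1 (\<lambda>_. e)) (0\<^sub>m 1 n) (0\<^sub>m n 1) A3"
    and A3: "A3 \<in> carrier_mat n n"
    and U3: "unitary_mat n U3" "D3 \<in> carrier_mat n n" "diagonal_mat D3" "A3 * U3 = U3 * D3"
  shows "\<exists>U D. unitary_mat (Suc n) U \<and> D \<in> carrier_mat (Suc n) (Suc n) \<and> diagonal_mat D \<and> H * U = U * D"
proof -
  define A where "A = four_block_mat (Matrix.mat 1 1 (\<lambda>_. e)) (0\<^sub>m 1 n) (0\<^sub>m n 1) A3"
  define B where "B = four_block_mat (1\<^sub>m 1) (0\<^sub>m 1 n) (0\<^sub>m n 1) U3"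
  define D where "D = four_block_mat (Matrix.mat 1 1 (\<lambda>_. e)) (0\<^sub>m 1 n) (0\<^sub>m n 1) D3"
  have U3c: "U3 \<in> carrier_mat n n" using U3(1) unitary_mat_def by blast
  have AB: "A * B = B * D"
    unfolding A_def B_def D_def using U3 U3c A3 by (simp add: mult_four_block_mat[of _ 1 1 _ n _ n _ _ 1 _ n])
  have Bu: "unitary_mat (Suc n) B" unfolding B_def using unitary_mat_border[OF U3(1)] by simp
  have Ac: "A \<in> carrier_mat (Suc n) (Suc n)" unfolding A_def using A3 by auto
  have Bc: "B \<in> carrier_mat (Suc n) (Suc n)" and Wc: "W \<in> carrier_mat (Suc n) (Suc n)"
    using Bu W unitary_mat_def by auto
  have Dc: "D \<in> carrier_mat (Suc n) (Suc n)" unfolding D_def using U3 by auto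
  have "diagonal_mat D" unfolding D_def using U3(2,3) by (auto simp: diagonal_mat_def)
  moreover have "H * (W * B) = (W * B) * D"
  proof -
    have "H * (W * B) = (W * A) * B" using H Wc Bc HW A_def by (simp flip: assoc_mult_mat)
    also have "\<dots> = W * (B * D)" using Wc Bc Dc Ac AB by (simp add: assoc_mult_mat[of _ "Suc n" "Suc n"])
    also have "\<dots> = (W * B) * D" using Wc Bc Dc by (simp flip: assoc_mult_mat)
    finally show ?thesis .
  qed
  ultimately show ?thesis using unitary_mat_mult[OF W Bu] Dc by blast
qed

text \<open>Spectral theorem: a Hermitian matrix is unitarily diagonalisable. Induction on the
  dimension, deflating one eigenvector at a time.\<close>
theorem hermitian_unitary_diagonalization:
  "hermitian_mat n H \<Longrightarrow>
     \<exists>U D. unitary_mat n U \<and> D \<in> carrier_mat n n \<and> diagonal_mat D \<and> H * U = U * D"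
proof (induction n arbitrary: H)
  case 0
  hence "H = 0\<^sub>m 0 0" by (auto simp: hermitian_mat_def)
  thus ?case by (intro exI[of _ "1\<^sub>m 0"] exI[of _ "0\<^sub>m 0 0"]) (auto simp: unitary_mat_def diagonal_mat_def)
next
  case (Suc n H)
  obtain W e A3 where W: "unitary_mat (Suc n) W" and A3: "hermitian_mat n A3"
    and HW: "H * W = W * four_block_mat (Matrix.mat 1 1 (\<lambda>_. e)) (0\<^sub>m 1 n) (0\<^sub>m n 1) A3"
    using hermitian_deflation[OF Suc.prems] by blast
  from Suc.IH[OF A3] obtain U3 D3 where
    "unitary_mat n U3" "D3 \<in> carrier_mat n n" "diagonal_mat D3" "A3 * U3 = U3 * D3" by blast
  moreover have "H \<in> carrier_mat (Suc n) (Suc n)" "A3 \<in> carrier_mat n n"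
    using Suc.prems A3 hermitian_mat_def by auto
  ultimately show ?case using block_diagonalization_step[OF W _ HW] by blast
qed

lemma index_mult_diagonal_mat:
  assumes U: "U \<in> carrier_mat m n" and D: "D \<in> carrier_mat n n" "diagonal_mat D"
    and i: "i < m" and k: "k < n"
  shows "(U * D) $$ (i,k) = U $$ (i,k) * D $$ (k,k)"
proof -
  have "(U * D) $$ (i,k) = (\<Sum>r<n. U $$ (i,r) * D $$ (r,k))"
    using U D i k by (subst index_mult_mat_sum) auto
  also have "\<dots> = (\<Sum>r<n. if r = k then U $$ (i,k) * D $$ (k,k) else 0)"
    using D k unfolding diagonal_mat_def by (intro sum.cong) auto
  finally show ?thesis using k by simp
qed

corollary hermitian_eigenbasis:
  assumes H: "hermitian_mat n H" and spec: "\<And>\<mu>. eigenvalue H \<mu> \<Longrightarrow> \<mu> \<in> complex_of_real ` S"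
  shows "\<exists>U r. unitary_mat n U \<and> (\<forall>k<n. r k \<in> S \<and> H *\<^sub>v col U k = complex_of_real (r k) \<cdot>\<^sub>v col U k)"
proof -
  obtain U D where U: "unitary_mat n U" "D \<in> carrier_mat n n" "diagonal_mat D" "H * U = U * D"
    using hermitian_unitary_diagonalization[OF H] by blast
  have Uc: "U \<in> carrier_mat n n" and Hc: "H \<in> carrier_mat n n"
    using U(1) H unfolding unitary_mat_def hermitian_mat_def by auto
  have "\<exists>r. r \<in> S \<and> H *\<^sub>v col U k = complex_of_real r \<cdot>\<^sub>v col U k" if k: "k < n" for k
  proof -
    have "H *\<^sub>v col U k = col (U * D) k" using Hc Uc k U(4) by (simp flip: col_mult2)
    also have "\<dots> = D $$ (k,k) \<cdot>\<^sub>v col U k"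
      using index_mult_diagonal_mat[OF Uc U(2,3) _ k] Uc U(2) k by (auto intro!: eq_vecI simp: mult.commute)
    finally have ev: "H *\<^sub>v col U k = D $$ (k,k) \<cdot>\<^sub>v col U k" .
    moreover have "col U k \<in> carrier_vec n" using col_dim[of U k] Uc by simp
    ultimately have "eigenvalue H (D $$ (k,k))" unfolding eigenvalue_def eigenvector_def
      using unitary_mat_col_nonzero[OF U(1) k] Hc by blast
    then obtain r where "D $$ (k,k) = complex_of_real r" "r \<in> S" using spec by blast
    thus ?thesis using ev by (intro exI[of _ r]) simp
  qed
  then obtain r where "\<And>k. k < n \<Longrightarrow> r k \<in> S \<and> H *\<^sub>v col U k = complex_of_real (r k) \<cdot>\<^sub>v col U k"
    by metis
  thus ?thesis using U(1) by blast
qed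

lemma eigenbasis_expansion:
  assumes U: "unitary_mat n U" and G: "G \<in> carrier_mat n n"
    and G_eig: "\<And>k. k < n \<Longrightarrow> G *\<^sub>v col U k = f k \<cdot>\<^sub>v col U k" and ij: "i < n" "j < n"
  shows "G $$ (i,j) = (\<Sum>k<n. f k * (U $$ (i,k) * cnj (U $$ (j,k))))"
proof -
  have Uc: "U \<in> carrier_mat n n" using U unitary_mat_def by blast
  have GU: "(G * U) $$ (i,k) = f k * U $$ (i,k)" if k: "k < n" for k
  proof -
    have "(G * U) $$ (i,k) = col (G * U) k $ i" using G Uc ij k by simp
    also have "\<dots> = (f k \<cdot>\<^sub>v col U k) $ i" unfolding col_mult2[OF G Uc k] G_eig[OF k] ..
    finally show ?thesis using Uc ij k by simp
  qed
  have G_eq: "G = (G * U) * mat_adjoint U"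
    using G Uc unitary_mat_right_inverse[OF U] by (simp add: assoc_mult_mat[of _ n n _ n _ n])
  have "G $$ (i,j) = ((G * U) * mat_adjoint U) $$ (i,j)" by (subst (1) G_eq) (rule refl)
  also have "\<dots> = (\<Sum>k<n. (G * U) $$ (i,k) * mat_adjoint U $$ (k,j))"
    using G Uc ij by (subst index_mult_mat_sum) auto
  also have "\<dots> = (\<Sum>k<n. f k * (U $$ (i,k) * cnj (U $$ (j,k))))"
    using Uc ij GU by (intro sum.cong) (auto simp: mult.assoc)
  finally show ?thesis .
qed

text \<open>Consequently, if all \<open>|f\<^sub>k| \<le> \<epsilon>\<close> then every entry of \<open>G\<close> is at most \<open>\<epsilon>\<close> in modulus:
  \<open>|U\<^sub>i\<^sub>k U\<^sub>j\<^sub>k| \<le> (|U\<^sub>i\<^sub>k|\<^sup>2 + |U\<^sub>j\<^sub>k|\<^sup>2)/2\<close> and the rows of \<open>U\<close> have unit length.\<close>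
lemma eigenbasis_entry_bound:
  assumes U: "unitary_mat n U" and G: "G \<in> carrier_mat n n"
    and G_eig: "\<And>k. k < n \<Longrightarrow> G *\<^sub>v col U k = f k \<cdot>\<^sub>v col U k"
    and f_le: "\<And>k. k < n \<Longrightarrow> cmod (f k) \<le> \<epsilon>" and ij: "i < n" "j < n"
  shows "cmod (G $$ (i,j)) \<le> \<epsilon>"
proof -
  have eps: "0 \<le> \<epsilon>" using f_le[of i] ij norm_ge_zero order_trans by blast
  have G_sum: "G $$ (i,j) = (\<Sum>k<n. f k * (U $$ (i,k) * cnj (U $$ (j,k))))"
    by (rule eigenbasis_expansion[OF U G G_eig ij])
  have "cmod (G $$ (i,j)) \<le> (\<Sum>k<n. \<epsilon> * (((cmod (U $$ (i,k)))^2 + (cmod (U $$ (j,k)))^2) / 2))"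
    unfolding G_sum
  proof (intro order_trans[OF norm_sum] sum_mono)
    fix k assume "k \<in> {..<n}"
    have "cmod (U $$ (i,k)) * cmod (U $$ (j,k)) \<le> ((cmod (U $$ (i,k)))^2 + (cmod (U $$ (j,k)))^2) / 2"
      using sum_squares_bound[of "cmod (U $$ (i,k))" "cmod (U $$ (j,k))"] by (simp add: field_simps)
    moreover have "cmod (f k) \<le> \<epsilon>" using f_le \<open>k \<in> {..<n}\<close> by simp
    ultimately have "cmod (f k) * (cmod (U $$ (i,k)) * cmod (U $$ (j,k)))
            \<le> \<epsilon> * (((cmod (U $$ (i,k)))^2 + (cmod (U $$ (j,k)))^2) / 2)"
      using eps by (intro mult_mono) auto
    thus "cmod (f k * (U $$ (i,k) * cnj (U $$ (j,k))))
            \<le> \<epsilon> * (((cmod (U $$ (i,k)))^2 + (cmod (U $$ (j,k)))^2) / 2)"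
      by (simp add: norm_mult)
  qed
  also have "\<dots> = \<epsilon> / 2 * (\<Sum>k<n. (cmod (U $$ (i,k)))^2) + \<epsilon> / 2 * (\<Sum>k<n. (cmod (U $$ (j,k)))^2)"
    by (simp add: sum_distrib_left add_divide_distrib distrib_left sum.distrib mult.assoc)
  also have "\<dots> = \<epsilon>" using unitary_mat_row_norm[OF U ij(1)] unitary_mat_row_norm[OF U ij(2)] by simp
  finally show ?thesis .
qed

section \<open>Banded matrices and matrix polynomials\<close>

lemma smult_mat_mult_vec:
  assumes "A \<in> carrier_mat n m" "v \<in> carrier_vec m"
  shows "(c \<cdot>\<^sub>m A) *\<^sub>v v = c \<cdot>\<^sub>v (A *\<^sub>v v)"
  by (rule eq_vecI) (use assms in \<open>auto simp: smult_scalar_prod_distrib[of _ m]\<close>)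

lemma banded_D:
  "banded p A \<Longrightarrow> i < dim_row A \<Longrightarrow> j < dim_col A \<Longrightarrow> real p < \<bar>real i - real j\<bar> \<Longrightarrow> A $$ (i,j) = 0"
  unfolding banded_def by blast

lemma banded_mono: "banded p A \<Longrightarrow> p \<le> q \<Longrightarrow> banded q A"
  unfolding banded_def by force

lemma banded_one: "banded p (1\<^sub>m n)"
  unfolding banded_def by auto

lemma banded_zero: "banded p (0\<^sub>m n n)"
  unfolding banded_def by auto

lemma banded_add:
  "A \<in> carrier_mat n n \<Longrightarrow> B \<in> carrier_mat n n \<Longrightarrow> banded p A \<Longrightarrow> banded p B \<Longrightarrow> banded p (A + B)"
  unfolding banded_def by auto

lemma banded_minus:
  "A \<in> carrier_mat n n \<Longrightarrow> B \<in> carrier_mat n n \<Longrightarrow> banded p A \<Longrightarrow> banded p B \<Longrightarrow> banded p (A - B)"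
  unfolding banded_def by auto

lemma banded_smult: "banded p A \<Longrightarrow> banded p (c \<cdot>\<^sub>m A)"
  unfolding banded_def by auto

text \<open>Bandwidths add under multiplication: \<open>(AB)\<^sub>i\<^sub>j = \<Sum>\<^sub>l A\<^sub>i\<^sub>l B\<^sub>l\<^sub>j\<close> and \<open>|i-l| \<le> p\<close>,
  \<open>|l-j| \<le> q\<close> force \<open>|i-j| \<le> p+q\<close>.\<close>
lemma banded_mult:
  assumes A: "A \<in> carrier_mat n n" and B: "B \<in> carrier_mat n n"
    and bA: "banded p A" and bB: "banded q B"
  shows "banded (p + q) (A * B)"
  unfolding banded_def
proof (intro allI impI)
  fix i j assume i: "i < dim_row (A * B)" and j: "j < dim_col (A * B)"
    and d: "real (p + q) < \<bar>real i - real j\<bar>"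
  have "A $$ (i,l) * B $$ (l,j) = 0" if l: "l < n" for l
  proof (cases "real p < \<bar>real i - real l\<bar>")
    case True
    thus ?thesis using banded_D[OF bA] i l A B by auto
  next
    case False
    hence "real q < \<bar>real l - real j\<bar>" using d by linarith
    thus ?thesis using banded_D[OF bB] j l A B by auto
  qed
  hence "(\<Sum>l<n. A $$ (i,l) * B $$ (l,j)) = 0" by (intro sum.neutral) auto
  thus "(A * B) $$ (i,j) = 0" using i j A B by (subst index_mult_mat_sum) auto
qed

fun cheb_mat :: "nat \<Rightarrow> nat \<Rightarrow> complex mat \<Rightarrow> complex mat" where
  "cheb_mat n 0 M = 1\<^sub>m n"
| "cheb_mat n (Suc 0) M = M"
| "cheb_mat n (Suc (Suc k)) M = 2 \<cdot>\<^sub>m (M * cheb_mat n (Suc k) M) - cheb_mat n k M"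

lemma cheb_mat_carrier: "M \<in> carrier_mat n n \<Longrightarrow> cheb_mat n k M \<in> carrier_mat n n"
  by (induction n k M rule: cheb_mat.induct) auto

lemma cheb_mat_eigen:
  assumes M: "M \<in> carrier_mat n n" and v: "v \<in> carrier_vec n"
    and ev: "M *\<^sub>v v = complex_of_real x \<cdot>\<^sub>v v"
  shows "cheb_mat n k M *\<^sub>v v = complex_of_real (cheb k x) \<cdot>\<^sub>v v"
proof (induction k rule: induct_nat_012)
  case (ge2 k)
  have "cheb_mat n (Suc (Suc k)) M *\<^sub>v v
          = 2 \<cdot>\<^sub>v (M *\<^sub>v (cheb_mat n (Suc k) M *\<^sub>v v)) - cheb_mat n k M *\<^sub>v v"
    using M v cheb_mat_carrier[OF M]
    by (simp add: minus_mult_distrib_mat_vec[of _ n n] smult_mat_mult_vec[of _ n n]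
        assoc_mult_mat_vec[of _ n n _ n])
  also have "\<dots> = complex_of_real (cheb (Suc (Suc k)) x) \<cdot>\<^sub>v v"
    using ge2 M v ev by (auto intro!: eq_vecI simp: mult_mat_vec algebra_simps)
  finally show ?case .
qed (use v ev in simp_all)

text \<open>\<open>T\<^sub>k(M)\<close> is a polynomial of degree \<open>k\<close> in \<open>M\<close>, hence \<open>kp\<close>-banded if \<open>M\<close> is \<open>p\<close>-banded.\<close>
lemma cheb_mat_banded:
  assumes M: "M \<in> carrier_mat n n" and b: "banded p M"
  shows "banded (k * p) (cheb_mat n k M)"
proof (induction k rule: induct_nat_012)
  case (ge2 k)
  have "banded (p + Suc k * p) (M * cheb_mat n (Suc k) M)"
    by (rule banded_mult[OF M cheb_mat_carrier[OF M] b ge2(2)])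
  moreover have "banded (Suc (Suc k) * p) (cheb_mat n k M)"
    by (rule banded_mono[OF ge2(1)]) simp
  ultimately show ?case
    using M cheb_mat_carrier[OF M] by (auto intro!: banded_minus banded_smult)
qed (use b banded_one in simp_all)

fun mat_sum :: "nat \<Rightarrow> (nat \<Rightarrow> complex mat) \<Rightarrow> nat \<Rightarrow> complex mat" where
  "mat_sum n f 0 = 0\<^sub>m n n"
| "mat_sum n f (Suc K) = mat_sum n f K + f K"

lemma mat_sum_carrier:
  "(\<And>k. k < K \<Longrightarrow> f k \<in> carrier_mat n n) \<Longrightarrow> mat_sum n f K \<in> carrier_mat n n"
  by (induction K) auto

lemma mat_sum_eigen:
  assumes "\<And>k. k < K \<Longrightarrow> f k \<in> carrier_mat n n" and v: "v \<in> carrier_vec n"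
    and "\<And>k. k < K \<Longrightarrow> f k *\<^sub>v v = complex_of_real (g k) \<cdot>\<^sub>v v"
  shows "mat_sum n f K *\<^sub>v v = complex_of_real (\<Sum>k<K. g k) \<cdot>\<^sub>v v"
  using assms
proof (induction K)
  case (Suc K)
  have "mat_sum n f (Suc K) *\<^sub>v v = mat_sum n f K *\<^sub>v v + f K *\<^sub>v v"
    using Suc.prems v by (simp add: add_mult_distrib_mat_vec[of _ n n] mat_sum_carrier)
  thus ?case using Suc by (simp add: add_smult_distrib_vec)
qed (auto intro!: eq_vecI)

lemma mat_sum_banded:
  "(\<And>k. k < K \<Longrightarrow> f k \<in> carrier_mat n n) \<Longrightarrow> (\<And>k. k < K \<Longrightarrow> banded p (f k))
     \<Longrightarrow> banded p (mat_sum n f K)"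
  by (induction K) (auto intro!: banded_add mat_sum_carrier simp: banded_zero)

definition legendre_mat :: "nat \<Rightarrow> nat \<Rightarrow> complex mat \<Rightarrow> complex mat" where
  "legendre_mat n k M = mat_sum n (\<lambda>i. complex_of_real (isqrt_coeff i * isqrt_coeff (k-i))
     \<cdot>\<^sub>m cheb_mat n (nat \<bar>2 * int i - int k\<bar>) M) (Suc k)"

lemma legendre_mat_carrier: "M \<in> carrier_mat n n \<Longrightarrow> legendre_mat n k M \<in> carrier_mat n n"
  unfolding legendre_mat_def by (intro mat_sum_carrier smult_carrier_mat cheb_mat_carrier)

lemma legendre_mat_eigen:
  assumes M: "M \<in> carrier_mat n n" and v: "v \<in> carrier_vec n"
    and ev: "M *\<^sub>v v = complex_of_real x \<cdot>\<^sub>v v"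
  shows "legendre_mat n k M *\<^sub>v v = complex_of_real (legendre k x) \<cdot>\<^sub>v v"
  unfolding legendre_mat_def legendre_def lessThan_Suc_atMost[symmetric]
  by (rule mat_sum_eigen[OF _ v])
    (use M v cheb_mat_carrier[OF M] cheb_mat_eigen[OF M v ev]
      in \<open>auto simp: smult_mat_mult_vec[of _ n n] smult_smult_assoc\<close>)

lemma legendre_mat_banded:
  assumes M: "M \<in> carrier_mat n n" and b: "banded p M"
  shows "banded (k * p) (legendre_mat n k M)"
  unfolding legendre_mat_def
proof (rule mat_sum_banded)
  fix i assume "i < Suc k"
  hence "nat \<bar>2 * int i - int k\<bar> * p \<le> k * p" by (intro mult_right_mono) auto
  thus "banded (k * p) (complex_of_real (isqrt_coeff i * isqrt_coeff (k-i))
          \<cdot>\<^sub>m cheb_mat n (nat \<bar>2 * int i - int k\<bar>) M)"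
    by (intro banded_smult banded_mono[OF cheb_mat_banded[OF M b]])
qed (use cheb_mat_carrier[OF M] in auto)

text \<open>The matrix counterpart of \<open>sgn_arg\<close>: an affine function of \<open>H\<^sup>2\<close>, hence \<open>2m\<close>-banded
  when \<open>H\<close> is \<open>m\<close>-banded.\<close>
definition sgn_arg_mat :: "real \<Rightarrow> real \<Rightarrow> nat \<Rightarrow> complex mat \<Rightarrow> complex mat" where
  "sgn_arg_mat a b n H =
     complex_of_real (-1 / (2 * sgn_scale a b * sgn_ratio a b)) \<cdot>\<^sub>m (H * H)
     + complex_of_real ((1 + (sgn_ratio a b)^2) / (2 * sgn_ratio a b)) \<cdot>\<^sub>m 1\<^sub>m n"

definition sgn_approx_mat :: "real \<Rightarrow> real \<Rightarrow> nat \<Rightarrow> nat \<Rightarrow> complex mat \<Rightarrow> complex mat" where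
  "sgn_approx_mat a b K n H = complex_of_real (1 / sqrt (sgn_scale a b)) \<cdot>\<^sub>m
     (H * mat_sum n (\<lambda>k. complex_of_real ((sgn_ratio a b)^k) \<cdot>\<^sub>m legendre_mat n k (sgn_arg_mat a b n H)) K)"

lemma sgn_arg_mat_carrier: "H \<in> carrier_mat n n \<Longrightarrow> sgn_arg_mat a b n H \<in> carrier_mat n n"
  unfolding sgn_arg_mat_def by auto

lemma sgn_approx_mat_carrier: "H \<in> carrier_mat n n \<Longrightarrow> sgn_approx_mat a b K n H \<in> carrier_mat n n"
proof -
  assume H: "H \<in> carrier_mat n n"
  have "mat_sum n (\<lambda>k. complex_of_real ((sgn_ratio a b)^k) \<cdot>\<^sub>m legendre_mat n k (sgn_arg_mat a b n H)) K
          \<in> carrier_mat n n"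
    using H by (intro mat_sum_carrier smult_carrier_mat legendre_mat_carrier sgn_arg_mat_carrier)
  thus ?thesis unfolding sgn_approx_mat_def using H by simp
qed

lemma sgn_arg_mat_eigen:
  assumes ab: "0 < a" "a < b" and H: "H \<in> carrier_mat n n" and v: "v \<in> carrier_vec n"
    and ev: "H *\<^sub>v v = complex_of_real r \<cdot>\<^sub>v v"
  shows "sgn_arg_mat a b n H *\<^sub>v v = complex_of_real (sgn_arg a b r) \<cdot>\<^sub>v v"
proof -
  define u where "u = sgn_ratio a b"
  define c where "c = sgn_scale a b"
  have uc: "0 < u" "0 < c" using sgn_ratio_bounds[OF ab] sgn_scale_pos[OF ab] by (auto simp: u_def c_def)
  have "(H * H) *\<^sub>v v = complex_of_real (r^2) \<cdot>\<^sub>v v"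
    using H v ev by (simp add: mult_mat_vec[of _ n n] power2_eq_square smult_smult_assoc)
  hence "sgn_arg_mat a b n H *\<^sub>v v
           = complex_of_real (-1 / (2 * c * u) * r^2 + (1 + u^2) / (2 * u)) \<cdot>\<^sub>v v"
    unfolding sgn_arg_mat_def u_def[symmetric] c_def[symmetric] using H v
    by (auto intro!: eq_vecI simp: add_mult_distrib_mat_vec[of _ n n] smult_mat_mult_vec[of _ n n]
        algebra_simps)
  also have "-1 / (2 * c * u) * r^2 + (1 + u^2) / (2 * u) = sgn_arg a b r"
    unfolding sgn_arg_def u_def[symmetric] c_def[symmetric] using uc by (simp add: field_simps)
  finally show ?thesis .
qed

lemma sgn_approx_mat_eigen:
  assumes ab: "0 < a" "a < b" and H: "H \<in> carrier_mat n n" and v: "v \<in> carrier_vec n"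
    and ev: "H *\<^sub>v v = complex_of_real r \<cdot>\<^sub>v v"
  shows "sgn_approx_mat a b K n H *\<^sub>v v = complex_of_real (sgn_approx a b K r) \<cdot>\<^sub>v v"
proof -
  define M where "M = sgn_arg_mat a b n H"
  have M: "M \<in> carrier_mat n n" unfolding M_def using H by (rule sgn_arg_mat_carrier)
  have L_eig: "legendre_mat n k M *\<^sub>v v = complex_of_real (legendre k (sgn_arg a b r)) \<cdot>\<^sub>v v" for k
    by (rule legendre_mat_eigen[OF M v sgn_arg_mat_eigen[OF ab H v ev, folded M_def]])
  define T where "T = mat_sum n (\<lambda>k. complex_of_real ((sgn_ratio a b)^k) \<cdot>\<^sub>m legendre_mat n k M) K"
  have T: "T \<in> carrier_mat n n" unfolding T_def using M
    by (intro mat_sum_carrier smult_carrier_mat legendre_mat_carrier)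
  have "T *\<^sub>v v = complex_of_real (\<Sum>k<K. legendre k (sgn_arg a b r) * (sgn_ratio a b)^k) \<cdot>\<^sub>v v"
    unfolding T_def
    by (rule mat_sum_eigen[OF _ v])
      (use M v legendre_mat_carrier[OF M] L_eig
        in \<open>auto simp: smult_mat_mult_vec[of _ n n] smult_smult_assoc mult.commute\<close>)
  thus ?thesis
    unfolding sgn_approx_mat_def sgn_approx_def M_def[symmetric] T_def[symmetric] using H T v ev
    by (auto intro!: eq_vecI simp: smult_mat_mult_vec[of _ n n] mult_mat_vec[of _ n n] algebra_simps)
qed

lemma sgn_approx_mat_banded:
  assumes H: "H \<in> carrier_mat n n" and bH: "banded m H" and K: "1 \<le> K"
  shows "banded (2 * m * (K - 1) + m) (sgn_approx_mat a b K n H)"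
proof -
  define M where "M = sgn_arg_mat a b n H"
  have M: "M \<in> carrier_mat n n" unfolding M_def using H by (rule sgn_arg_mat_carrier)
  have "banded (m + m) (H * H)" by (rule banded_mult[OF H H bH bH])
  hence HH: "banded (2 * m) (H * H)" by (simp only: mult_2)
  have bM: "banded (2 * m) M" unfolding M_def sgn_arg_mat_def
    by (rule banded_add[OF _ _ banded_smult[OF HH] banded_smult[OF banded_one]]) (use H in auto)
  define T where "T = mat_sum n (\<lambda>k. complex_of_real ((sgn_ratio a b)^k) \<cdot>\<^sub>m legendre_mat n k M) K"
  have T: "T \<in> carrier_mat n n" unfolding T_def using M
    by (intro mat_sum_carrier smult_carrier_mat legendre_mat_carrier)
  have "banded (2 * m * (K - 1)) T"
    unfolding T_def
  proof (rule mat_sum_banded)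
    fix k assume "k < K"
    hence "k * (2 * m) \<le> (K - 1) * (2 * m)" by (intro mult_le_mono1) simp
    hence "k * (2 * m) \<le> 2 * m * (K - 1)" by (simp only: mult.commute)
    thus "banded (2 * m * (K - 1)) (complex_of_real ((sgn_ratio a b)^k) \<cdot>\<^sub>m legendre_mat n k M)"
      by (intro banded_smult banded_mono[OF legendre_mat_banded[OF M bM]])
  qed (use M legendre_mat_carrier in auto)
  from banded_mult[OF H T bH this]
  show ?thesis unfolding sgn_approx_mat_def M_def[symmetric] T_def[symmetric]
    by (simp add: banded_smult add.commute)
qed

section \<open>The spectral projector\<close>

lemma hermitian_cscalar:
  assumes A: "hermitian_mat n A" and x: "x \<in> carrier_vec n" and y: "y \<in> carrier_vec n"
  shows "(A *\<^sub>v x) \<bullet>c y = x \<bullet>c (A *\<^sub>v y)"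
proof -
  have Ac: "A \<in> carrier_mat n n" and hA: "\<And>i j. i < n \<Longrightarrow> j < n \<Longrightarrow> A $$ (i,j) = cnj (A $$ (j,i))"
    using A unfolding hermitian_mat_def by blast+
  have "(A *\<^sub>v x) \<bullet>c y = (\<Sum>i<n. \<Sum>j<n. A $$ (i,j) * x $ j * cnj (y $ i))"
    using Ac x y by (simp add: scalar_prod_def atLeast0LessThan sum_distrib_right)
  also have "\<dots> = (\<Sum>j<n. \<Sum>i<n. x $ j * cnj (A $$ (j,i) * y $ i))"
  proof (subst sum.swap, intro sum.cong refl)
    fix j i assume "j \<in> {..<n}" "i \<in> {..<n}"
    thus "A $$ (i,j) * x $ j * cnj (y $ i) = x $ j * cnj (A $$ (j,i) * y $ i)" using hA[of i j] by simp
  qed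
  also have "\<dots> = x \<bullet>c (A *\<^sub>v y)"
    using Ac x y by (simp add: scalar_prod_def atLeast0LessThan sum_distrib_left)
  finally show ?thesis .
qed

lemma orthogonal_complement_submodule:
  assumes v: "v \<in> carrier_vec n"
  shows "submodule class_ring {x \<in> carrier_vec n. x \<bullet>c v = 0} (module_vec TYPE(complex) n)"
proof -
  interpret vec_module "TYPE(complex)" n .
  show ?thesis
  proof (rule submodule.intro)
    show "module class_ring V" by (rule module_axioms)
  next
    fix x y assume "x \<in> {x \<in> carrier_vec n. x \<bullet>c v = 0}" "y \<in> {x \<in> carrier_vec n. x \<bullet>c v = 0}"
    thus "x \<oplus>\<^bsub>V\<^esub> y \<in> {x \<in> carrier_vec n. x \<bullet>c v = 0}"
      using v by (auto simp: module_vec_def add_scalar_prod_distrib[of _ n])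
  next
    fix c :: complex and x assume "x \<in> {x \<in> carrier_vec n. x \<bullet>c v = 0}"
    thus "c \<odot>\<^bsub>V\<^esub> x \<in> {x \<in> carrier_vec n. x \<bullet>c v = 0}" using v by (auto simp: module_vec_def)
  qed (use v in \<open>auto simp: module_vec_def\<close>)
qed

text \<open>Eigenvectors of a Hermitian matrix for distinct eigenvalues are orthogonal; hence so is
  the whole negative eigenspace to an eigenvector with positive eigenvalue.\<close>
lemma neg_eigenspace_orthogonal:
  assumes H: "hermitian_mat n H" and v: "v \<in> carrier_vec n"
    and ev: "H *\<^sub>v v = complex_of_real r \<cdot>\<^sub>v v" and r: "0 < r"
    and w: "w \<in> neg_eigenspace n H"
  shows "w \<bullet>c v = 0"
proof -
  interpret vec_module "TYPE(complex)" n .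
  have Hc: "H \<in> carrier_mat n n" using H hermitian_mat_def by blast
  let ?S = "{v. \<exists>k. eigenvector H v k \<and> k \<in> \<real> \<and> Re k < 0}"
  have "?S \<subseteq> {x \<in> carrier_vec n. x \<bullet>c v = 0}"
  proof
    fix x assume "x \<in> ?S"
    then obtain k where x: "x \<in> carrier_vec n" "H *\<^sub>v x = k \<cdot>\<^sub>v x" "k \<in> \<real>" "Re k < 0"
      using Hc unfolding eigenvector_def by auto
    have "k * (x \<bullet>c v) = (H *\<^sub>v x) \<bullet>c v" unfolding x(2) using x v by simp
    also have "\<dots> = x \<bullet>c (H *\<^sub>v v)" by (rule hermitian_cscalar[OF H x(1) v])
    also have "\<dots> = complex_of_real r * (x \<bullet>c v)"
      unfolding ev using x v by (simp add: scalar_prod_def sum_distrib_left mult_ac)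
    finally have "(k - complex_of_real r) * (x \<bullet>c v) = 0" by (simp add: algebra_simps)
    moreover have "k \<noteq> complex_of_real r" using x r by auto
    ultimately show "x \<in> {x \<in> carrier_vec n. x \<bullet>c v = 0}" using x by simp
  qed
  from span_is_subset[OF this orthogonal_complement_submodule[OF v]]
  show ?thesis using w unfolding neg_eigenspace_def by auto
qed

lemma neg_spectral_projector_reflection:
  assumes P: "neg_spectral_projector n H P" and H: "hermitian_mat n H"
    and v: "v \<in> carrier_vec n" "v \<noteq> 0\<^sub>v n" and ev: "H *\<^sub>v v = complex_of_real r \<cdot>\<^sub>v v" and r: "r \<noteq> 0"
  shows "(1\<^sub>m n - 2 \<cdot>\<^sub>m P) *\<^sub>v v = complex_of_real (sgn r) \<cdot>\<^sub>v v"
proof -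
  interpret vec_module "TYPE(complex)" n .
  have Pc: "P \<in> carrier_mat n n" and PP: "P * P = P" and hP: "hermitian_mat n P"
    and range: "{P *\<^sub>v w | w. w \<in> carrier_vec n} = neg_eigenspace n H"
    using P unfolding neg_spectral_projector_def by auto
  have Hc: "H \<in> carrier_mat n n" using H hermitian_mat_def by blast
  have idem: "P *\<^sub>v (P *\<^sub>v w) = P *\<^sub>v w" if "w \<in> carrier_vec n" for w
    using Pc that by (simp flip: assoc_mult_mat_vec add: PP)
  have Pv: "P *\<^sub>v v = (if r < 0 then v else 0\<^sub>v n)"
  proof (cases "r < 0")
    case True
    let ?S = "{v. \<exists>k. eigenvector H v k \<and> k \<in> \<real> \<and> Re k < 0}"
    have "v \<in> ?S" using Hc v ev True
      by (auto simp: eigenvector_def intro!: exI[of _ "complex_of_real r"])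
    moreover have "?S \<subseteq> carrier_vec n" using Hc unfolding eigenvector_def by auto
    ultimately have "v \<in> span ?S" using in_own_span by (meson subsetD)
    hence "v \<in> {P *\<^sub>v w | w. w \<in> carrier_vec n}" unfolding range neg_eigenspace_def .
    then obtain w where "w \<in> carrier_vec n" "v = P *\<^sub>v w" by auto
    thus ?thesis using True idem by simp
  next
    case False
    hence "0 < r" using r by simp
    have Pvc: "P *\<^sub>v v \<in> carrier_vec n" using Pc v by simp
    have "P *\<^sub>v v \<in> neg_eigenspace n H" using v unfolding range[symmetric] by auto
    hence "(P *\<^sub>v v) \<bullet>c v = 0" by (rule neg_eigenspace_orthogonal[OF H v(1) ev \<open>0 < r\<close>])
    hence "(P *\<^sub>v v) \<bullet>c (P *\<^sub>v v) = 0"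
      using hermitian_cscalar[OF hP Pvc v(1)] idem[OF v(1)] by simp
    thus ?thesis using False Pvc by simp
  qed
  show ?thesis
    using Pc v Pv r by (auto intro!: eq_vecI simp: minus_mult_distrib_mat_vec[of _ n n]
        smult_mat_mult_vec[of _ n n] sgn_real_def)
qed

text \<open>Entrywise, \<open>I - 2P\<close> is approximated by the matrix polynomial \<open>sgn_approx_mat\<close> as well as
  \<open>sgn\<close> is approximated by \<open>sgn_approx\<close> on the spectrum: both matrices are diagonal in an
  orthonormal eigenbasis of \<open>H\<close>.\<close>
lemma reflection_approx_entry_bound:
  assumes ab: "0 < a" "a < b" and H: "hermitian_mat n H"
    and spec: "\<And>k. eigenvalue H k \<Longrightarrow> k \<in> complex_of_real ` ({-b..-a} \<union> {a..b})"
    and P: "neg_spectral_projector n H P"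
    and err: "\<And>r. a \<le> \<bar>r\<bar> \<Longrightarrow> \<bar>r\<bar> \<le> b \<Longrightarrow> \<bar>sgn r - sgn_approx a b K r\<bar> \<le> \<epsilon>"
    and ij: "i < n" "j < n"
  shows "cmod ((1\<^sub>m n - 2 \<cdot>\<^sub>m P - sgn_approx_mat a b K n H) $$ (i,j)) \<le> \<epsilon>"
proof -
  have Hc: "H \<in> carrier_mat n n" using H hermitian_mat_def by blast
  have Pc: "P \<in> carrier_mat n n" using P neg_spectral_projector_def by blast
  have Sc: "sgn_approx_mat a b K n H \<in> carrier_mat n n" by (rule sgn_approx_mat_carrier[OF Hc])
  obtain U r where U: "unitary_mat n U"
    and r: "\<And>k. k < n \<Longrightarrow> r k \<in> {-b..-a} \<union> {a..b}"
    and r_eig: "\<And>k. k < n \<Longrightarrow> H *\<^sub>v col U k = complex_of_real (r k) \<cdot>\<^sub>v col U k"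
    using hermitian_eigenbasis[OF H spec] by blast
  have Uc: "U \<in> carrier_mat n n" using U unitary_mat_def by blast
  show ?thesis
  proof (rule eigenbasis_entry_bound[OF U _ _ _ ij])
    fix k assume k: "k < n"
    have c: "col U k \<in> carrier_vec n" "col U k \<noteq> 0\<^sub>v n"
      using Uc unitary_mat_col_nonzero[OF U k] by auto
    have r_abs: "a \<le> \<bar>r k\<bar>" "\<bar>r k\<bar> \<le> b" using r[OF k] ab by auto
    hence "r k \<noteq> 0" using ab by auto
    have "(1\<^sub>m n - 2 \<cdot>\<^sub>m P - sgn_approx_mat a b K n H) *\<^sub>v col U k
            = (1\<^sub>m n - 2 \<cdot>\<^sub>m P) *\<^sub>v col U k - sgn_approx_mat a b K n H *\<^sub>v col U k"
      using Pc Sc c by (intro minus_mult_distrib_mat_vec) auto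
    also have "\<dots> = complex_of_real (sgn (r k)) \<cdot>\<^sub>v col U k
                       - complex_of_real (sgn_approx a b K (r k)) \<cdot>\<^sub>v col U k"
      using neg_spectral_projector_reflection[OF P H c r_eig[OF k] \<open>r k \<noteq> 0\<close>]
        sgn_approx_mat_eigen[OF ab Hc c(1) r_eig[OF k]] by simp
    finally show "(1\<^sub>m n - 2 \<cdot>\<^sub>m P - sgn_approx_mat a b K n H) *\<^sub>v col U k
            = complex_of_real (sgn (r k) - sgn_approx a b K (r k)) \<cdot>\<^sub>v col U k"
      using c by (auto intro!: eq_vecI simp: algebra_simps)
    show "cmod (complex_of_real (sgn (r k) - sgn_approx a b K (r k))) \<le> \<epsilon>"
      unfolding norm_of_real using err r_abs by blast
  qed (use Pc Sc in auto)
qed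

text \<open>Since \<open>sgn_approx_mat\<close> of order \<open>K\<close> is \<open>(2K-1)m\<close>-banded, it vanishes at distance
  \<open>|i - j| \<ge> 2mK\<close>, where the entry of \<open>P = (I - (I - 2P))/2\<close> is thus controlled by the
  approximation error alone.\<close>
lemma projector_entry_bound:
  assumes ab: "0 < a" "a < b" and m: "1 \<le> m"
    and H: "hermitian_mat n H" and band: "banded m H"
    and spec: "\<And>k. eigenvalue H k \<Longrightarrow> k \<in> complex_of_real ` ({-b..-a} \<union> {a..b})"
    and P: "neg_spectral_projector n H P"
    and err: "\<And>r. a \<le> \<bar>r\<bar> \<Longrightarrow> \<bar>r\<bar> \<le> b \<Longrightarrow> \<bar>sgn r - sgn_approx a b K r\<bar> \<le> \<epsilon>"
    and ij: "i < n" "j < n"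
    and K: "K = 0 \<or> real (2 * m * K) \<le> \<bar>real i - real j\<bar>"
  shows "cmod (P $$ (i,j)) \<le> (if i = j then 1/2 else 0) + \<epsilon> / 2"
proof -
  have Hc: "H \<in> carrier_mat n n" using H hermitian_mat_def by blast
  have Pc: "P \<in> carrier_mat n n" using P neg_spectral_projector_def by blast
  define S where "S = sgn_approx_mat a b K n H"
  have Sc: "S \<in> carrier_mat n n" unfolding S_def by (rule sgn_approx_mat_carrier[OF Hc])
  have S0: "S $$ (i,j) = 0"
  proof (cases "K = 0")
    case True
    thus ?thesis unfolding S_def sgn_approx_mat_def using Hc ij by simp
  next
    case False
    hence K1: "1 \<le> K" by simp
    have "real (2 * m * (K - 1) + m) < \<bar>real i - real j\<bar>" using K m False
      by (cases K) (auto simp: algebra_simps)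
    from banded_D[OF sgn_approx_mat_banded[OF Hc band K1] _ _ this]
    show ?thesis using Sc ij unfolding S_def by simp
  qed
  have "(1\<^sub>m n - 2 \<cdot>\<^sub>m P - S) $$ (i,j) = (if i = j then 1 else 0) - 2 * P $$ (i,j)"
    using Pc Sc ij S0 by simp
  hence P_eq: "P $$ (i,j) = ((if i = j then 1 else 0) - (1\<^sub>m n - 2 \<cdot>\<^sub>m P - S) $$ (i,j)) / 2" by simp
  have "cmod (P $$ (i,j)) = cmod ((if i = j then 1 else 0) - (1\<^sub>m n - 2 \<cdot>\<^sub>m P - S) $$ (i,j)) / 2"
    unfolding P_eq by (simp only: norm_divide) simp
  also have "\<dots> \<le> (cmod (if i = j then 1 else 0 :: complex) + cmod ((1\<^sub>m n - 2 \<cdot>\<^sub>m P - S) $$ (i,j))) / 2"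
    by (intro divide_right_mono norm_triangle_ineq4) simp
  also have "\<dots> \<le> (if i = j then 1/2 else 0) + \<epsilon> / 2"
    using reflection_approx_entry_bound[OF ab H spec P err ij, folded S_def] by auto
  finally show ?thesis .
qed

text \<open>Choosing \<open>K = \<lfloor>|i - j|/(2m)\<rfloor>\<close> turns the geometric error \<open>\<xi>^-K\<close> into decay in \<open>|i - j|\<close>.\<close>
lemma band_order_choice:
  assumes \<xi>: "1 < \<xi>" and m: "1 \<le> m" and x: "0 \<le> x"
  obtains K :: nat where "K = 0 \<or> real (2 * m * K) \<le> x"
    and "(1 / \<xi>)^K \<le> \<xi> * \<xi> powr (- x / (2 * real m))"
proof -
  define K where "K = nat \<lfloor>x / (2 * real m)\<rfloor>"
  have m2: "0 < 2 * real m" using m by simp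
  have "real K \<le> x / (2 * real m)" "x / (2 * real m) < real K + 1"
    unfolding K_def using x m2 by (simp_all add: divide_nonneg_pos)
  have "K = 0 \<or> real (2 * m * K) \<le> x"
    using \<open>real K \<le> x / (2 * real m)\<close> m2 by (simp add: field_simps)
  moreover have "(1 / \<xi>)^K = \<xi> powr (- real K)"
    using \<xi> by (simp add: powr_minus powr_realpow divide_inverse power_inverse)
  moreover have "\<xi> powr (- real K) \<le> \<xi> powr (1 + (- x / (2 * real m)))"
    using \<xi> \<open>x / (2 * real m) < real K + 1\<close> by (intro powr_mono) auto
  moreover have "\<xi> powr (1 + (- x / (2 * real m))) = \<xi> * \<xi> powr (- x / (2 * real m))"
    by (subst powr_add) (use \<xi> in simp)
  ultimately show ?thesis using that[of K] by simp
qed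

lemma projector_entry_decay:
  assumes ab: "0 < a" "a < b" and m: "1 \<le> m" and \<xi>: "1 < \<xi>"
    and H: "hermitian_mat n H" and band: "banded m H"
    and spec: "\<And>k. eigenvalue H k \<Longrightarrow> k \<in> complex_of_real ` ({-b..-a} \<union> {a..b})"
    and P: "neg_spectral_projector n H P"
    and E: "0 \<le> E" "\<And>K r. a \<le> \<bar>r\<bar> \<Longrightarrow> \<bar>r\<bar> \<le> b \<Longrightarrow> \<bar>sgn r - sgn_approx a b K r\<bar> \<le> E * (1 / \<xi>)^K"
    and ij: "i < n" "j < n"
  shows "cmod (P $$ (i,j)) \<le> (1/2 + E * \<xi> / 2) * \<xi> powr (- \<bar>real i - real j\<bar> / (2 * real m))"
proof -
  define w where "w = \<xi> powr (- \<bar>real i - real j\<bar> / (2 * real m))"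
  obtain K where K: "K = 0 \<or> real (2 * m * K) \<le> \<bar>real i - real j\<bar>" and Kw: "(1 / \<xi>)^K \<le> \<xi> * w"
    using band_order_choice[OF \<xi> m, of "\<bar>real i - real j\<bar>"] unfolding w_def by auto
  have "cmod (P $$ (i,j)) \<le> (if i = j then 1/2 else 0) + E * (1 / \<xi>)^K / 2"
    by (rule projector_entry_bound[OF ab m H band spec P E(2) ij K])
  moreover have "(if i = j then 1/2 else 0) \<le> 1/2 * w" using \<xi> by (auto simp: w_def)
  moreover have "E * (1 / \<xi>)^K \<le> E * (\<xi> * w)" using Kw E(1) by (rule mult_left_mono)
  ultimately show ?thesis unfolding w_def[symmetric] by (simp add: algebra_simps)
qed

text \<open>The constant \<open>C = 1/2 + E\<xi>/2\<close> comes from the scalar error bound alone, so it is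
  independent of \<open>n\<close>, \<open>i\<close> and \<open>j\<close>.\<close>
theorem mainTheorem12:
  fixes a b \<xi> :: real and m :: nat
    and H P :: "nat \<Rightarrow> complex mat"
  assumes "0 < a" and "a < b" and "1 \<le> m"
    and "\<And>n. hermitian_mat n (H n)"
    and "\<And>n. banded m (H n)"
    and "\<And>n k. eigenvalue (H n) k \<Longrightarrow> k \<in> complex_of_real ` ({-b..-a} \<union> {a..b})"
    and "\<And>n. neg_spectral_projector n (H n) (P n)"
    and "1 < \<xi>" and "\<xi> < (b + a) / (b - a)"
  shows "\<exists>C>0. \<forall>n i j. i < n \<longrightarrow> j < n \<longrightarrow>
           cmod (P n $$ (i,j)) \<le> C * \<xi> powr (- \<bar>real i - real j\<bar> / (2 * real m))"
proof -
  obtain E where E: "0 \<le> E"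
    "\<And>K r. a \<le> \<bar>r\<bar> \<Longrightarrow> \<bar>r\<bar> \<le> b \<Longrightarrow> \<bar>sgn r - sgn_approx a b K r\<bar> \<le> E * (1 / \<xi>)^K"
    using sgn_approx_error[OF assms(1,2,8,9)] by blast
  show ?thesis
  proof (intro exI[of _ "1/2 + E * \<xi> / 2"] conjI allI impI)
    show "0 < 1/2 + E * \<xi> / 2" using E(1) assms(8) by (simp add: add_pos_nonneg)
    fix n i j :: nat assume "i < n" "j < n"
    with projector_entry_decay[of a b m \<xi> n "H n" "P n" E i j] assms E
    show "cmod (P n $$ (i,j)) \<le> (1/2 + E * \<xi> / 2) * \<xi> powr (- \<bar>real i - real j\<bar> / (2 * real m))"
      by blast
  qed
qed

end
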